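(* Let $\{c_n\}_{n\ge1}$ be a real sequence and $\{d_{n+1}\}_{n\ge1}$ a positive chain sequence, and let the polynomials $P_n$ be defined by $P_0(x)=1$, $P_1(x)=x-c_1$ and \[ P_{n+1}(x)=(x-c_{n+1})P_n(x)-d_{n+1}(x^2+1)P_{n-1}(x),\qquad n\ge1 . \] Put $u_0(x)=1$ and \[ u_n(x)=\frac{(-1)^n}{(x-i)^n\prod_{j=1}^n\sqrt{d_{j+1}}}\,P_n(x),\qquad n\ge1, \] and $\mathbf u_n(x)=[u_0(x),u_1(x),\dots,u_{n-1}(x)]^T$. For $n\ge2$ let $\mathbf A_n$ be the $n\times n$ tridiagonal matrix with diagonal entries $c_1,\dots,c_n$, entries $(\mathbf A_n)_{k,k+1}=i\sqrt{d_{k+1}}$ and $(\mathbf A_n)_{k+1,k}=-i\sqrt{d_{k+1}}$ for $k=1,\dots,n-1$, and let $\mathbf B_n$ be the $n\times n$ tridiagonal matrix with all diagonal entries $1$ and $(\mathbf B_n)_{k,k+1}=(\mathbf B_n)_{k+1,k}=\sqrt{d_{k+1}}$ for $k=1,\dots,n-1$. Let $\mathbf e_n$ be the $n$-th column of the $n\times n$ identity matrix. Then for every $n\ge2$, \[ \mathbf A_n\mathbf u_n(x)=x\,\mathbf B_n\mathbf u_n(x)+\sqrt{d_{n+1}}\,(x-i)\,u_n(x)\,\mathbf e_n . \] Moreover, for $n\ge2$ the zeros of $P_n$ are the eigenvalues of the generalized eigenvalue problem $\mathbf A_n\mathbf u_n(x)=x\,\mathbf B_n\mathbf u_n(x)$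.
   Context: A sequence $\{d_{n+1}\}_{n\ge1}$ is a positive chain sequence if there is a sequence $\{g_{n+1}\}_{n\ge0}$ (a parameter sequence) with $0\le g_1<1$, $0<g_n<1$ for $n\ge2$, and $d_{n+1}=(1-g_n)g_{n+1}$ for $n\ge1$. *)

theory Defs
  imports Complex_Main "Jordan_Normal_Form.Matrix"
begin

definition positive_chain_sequence :: "(nat \<Rightarrow> real) \<Rightarrow> bool" where
  "positive_chain_sequence d \<longleftrightarrow>
     (\<exists>g :: nat \<Rightarrow> real. 0 \<le> g 1 \<and> g 1 < 1 \<and> (\<forall>n\<ge>2. 0 < g n \<and> g n < 1) \<and>
        (\<forall>n\<ge>1. d (n + 1) = (1 - g n) * g (n + 1)))"

fun Pn :: "(nat \<Rightarrow> real) \<Rightarrow> (nat \<Rightarrow> real) \<Rightarrow> nat \<Rightarrow> complex \<Rightarrow> complex" where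
  "Pn c d 0 x = 1"
| "Pn c d (Suc 0) x = x - of_real (c 1)"
| "Pn c d (Suc (Suc n)) x =
     (x - of_real (c (n + 2))) * Pn c d (Suc n) x - of_real (d (n + 2)) * (x\<^sup>2 + 1) * Pn c d n x"

definition un :: "(nat \<Rightarrow> real) \<Rightarrow> (nat \<Rightarrow> real) \<Rightarrow> nat \<Rightarrow> complex \<Rightarrow> complex" where
  "un c d n x = (-1) ^ n / ((x - \<i>) ^ n * of_real (\<Prod>j = 1..n. sqrt (d (j + 1)))) * Pn c d n x"

definition uvec :: "(nat \<Rightarrow> real) \<Rightarrow> (nat \<Rightarrow> real) \<Rightarrow> nat \<Rightarrow> complex \<Rightarrow> complex vec" where
  "uvec c d n x = vec n (\<lambda>k. un c d k x)"

text \<open>Matrices A_n and B_n (0-based indices: row i corresponds to row i+1 of the paper).\<close>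
definition Amat :: "(nat \<Rightarrow> real) \<Rightarrow> (nat \<Rightarrow> real) \<Rightarrow> nat \<Rightarrow> complex mat" where
  "Amat c d n = mat n n (\<lambda>(i, j).
     if i = j then of_real (c (i + 1))
     else if j = i + 1 then \<i> * of_real (sqrt (d (i + 2)))
     else if i = j + 1 then - \<i> * of_real (sqrt (d (j + 2)))
     else 0)"

definition Bmat :: "(nat \<Rightarrow> real) \<Rightarrow> nat \<Rightarrow> complex mat" where
  "Bmat d n = mat n n (\<lambda>(i, j).
     if i = j then 1
     else if j = i + 1 then of_real (sqrt (d (i + 2)))
     else if i = j + 1 then of_real (sqrt (d (j + 2)))
     else 0)"

end

theory Submission
  imports Defs
begin

text \<open>For \<open>x \<noteq> \<i>\<close> the sequence \<open>u\<^sub>k(x)\<close> solves every row of the infinite tridiagonal system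
  \<open>(A - x B) w = 0\<close>: this is the recurrence of \<open>P\<^sub>n\<close> after rescaling. Cutting the system at size
  \<open>n\<close> only spoils the last row, by a multiple of \<open>u\<^sub>n(x)\<close>. Conversely, for \<open>z \<noteq> \<i>\<close> the coefficient
  \<open>(\<i> - z) * sqrt (d (k + 2))\<close> of \<open>w (k + 1)\<close> in row \<open>k\<close> is nonzero, so a solution of the first \<open>n - 1\<close> rows is a
  multiple of \<open>(u\<^sub>k(z))\<close>, and the last row forces \<open>u\<^sub>n(z) = 0\<close>. At \<open>z = \<i>\<close> the system is lower
  triangular with diagonal entries \<open>c k - \<i> \<noteq> 0\<close>, matching \<open>P\<^sub>n(\<i>) \<noteq> 0\<close>.\<close>

lemma positive_chain_sequence_pos:
  assumes "positive_chain_sequence d" and "2 \<le> m"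
  shows "0 < d m"
proof -
  obtain g where g1: "g 1 < 1" and g: "\<forall>n\<ge>2. 0 < g n \<and> g n < 1"
    and dg: "\<forall>n\<ge>1. d (n + 1) = (1 - g n) * g (n + 1)"
    using assms(1) unfolding positive_chain_sequence_def by blast
  have "d m = (1 - g (m - 1)) * g m"
    using dg[rule_format, of "m - 1"] assms(2) by simp
  moreover have "g (m - 1) < 1"
    using g1 g assms(2) by (cases "m - 1 = 1") auto
  ultimately show ?thesis
    using g assms(2) by simp
qed

lemma Pn_at_i_nonzero: "Pn c d k \<i> \<noteq> 0"
proof (induction c d k \<i> rule: Pn.induct)
  case (3 c d n)
  have "(\<i>::complex)\<^sup>2 + 1 = 0"
    by (simp add: power2_eq_square)
  moreover have "\<i> - complex_of_real (c (n + 2)) \<noteq> 0"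
    by (simp add: complex_eq_iff)
  ultimately show ?case
    using 3 by simp
qed (simp_all add: complex_eq_iff)

text \<open>Row \<open>k\<close> of \<open>(A - z B) w\<close> for an infinite sequence \<open>w\<close>; the matrices of size \<open>n\<close>
  see the sequence padded by zeros from index \<open>n\<close> on.\<close>
definition pencil_row :: "(nat \<Rightarrow> real) \<Rightarrow> (nat \<Rightarrow> real) \<Rightarrow> complex \<Rightarrow> (nat \<Rightarrow> complex) \<Rightarrow> nat \<Rightarrow> complex" where
  "pencil_row c d z w k =
     (of_real (c (k + 1)) - z) * w k + (\<i> - z) * of_real (sqrt (d (k + 2))) * w (k + 1)
     + (if 0 < k then (- \<i> - z) * of_real (sqrt (d (k + 1))) * w (k - 1) else 0)"

lemma pencil_row_scale:
  "pencil_row c d z (\<lambda>j. a * w j) k = a * pencil_row c d z w k"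
  unfolding pencil_row_def by (simp add: algebra_simps)

lemma pencil_row_diff:
  "pencil_row c d z (\<lambda>j. v j - w j) k = pencil_row c d z v k - pencil_row c d z w k"
  unfolding pencil_row_def by (simp add: algebra_simps)

definition trunc_seq :: "nat \<Rightarrow> (nat \<Rightarrow> 'a::zero) \<Rightarrow> nat \<Rightarrow> 'a" where
  "trunc_seq n w k = (if k < n then w k else 0)"

lemma pencil_row_trunc_seq:
  assumes "i < n"
  shows "pencil_row c d z (trunc_seq n w) i
       = pencil_row c d z w i - (if i + 1 = n then (\<i> - z) * of_real (sqrt (d (n + 1))) * w n else 0)"
  using assms unfolding pencil_row_def trunc_seq_def by auto

lemma tridiagonal_mult_vec_index:
  assumes "i < n" and "v \<in> carrier_vec n"
  shows "(mat n n (\<lambda>(i, j). if i = j then a i else if j = i + 1 then b i else if i = j + 1 then e j else 0)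
            *\<^sub>v v) $ i
       = a i * v $ i + (if i + 1 < n then b i * v $ (i + 1) else 0)
         + (if 0 < i then e (i - 1) * v $ (i - 1) else 0)"
proof -
  have "(mat n n (\<lambda>(i, j). if i = j then a i else if j = i + 1 then b i else if i = j + 1 then e j else 0)
            *\<^sub>v v) $ i
     = (\<Sum>j<n. (if i = j then a i else if j = i + 1 then b i else if i = j + 1 then e j else 0) * v $ j)"
    using assms by (simp add: scalar_prod_def lessThan_atLeast0)
  also have "\<dots> = (\<Sum>j<n. if j = i then a i * v $ j else 0) + (\<Sum>j<n. if j = i + 1 then b i * v $ j else 0)
      + (\<Sum>j<n. if 0 < i then if j = i - 1 then e j * v $ j else 0 else 0)"
    unfolding sum.distrib[symmetric] by (rule sum.cong) auto
  also have "\<dots> = a i * v $ i + (if i + 1 < n then b i * v $ (i + 1) else 0)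
      + (if 0 < i then e (i - 1) * v $ (i - 1) else 0)"
    using assms(1) by auto
  finally show ?thesis .
qed

lemma pencil_mult_vec_index:
  assumes "i < n" and "w \<in> carrier_vec n"
  shows "(Amat c d n *\<^sub>v w) $ i - z * (Bmat d n *\<^sub>v w) $ i
       = pencil_row c d z (trunc_seq n (($) w)) i"
proof -
  have A: "(Amat c d n *\<^sub>v w) $ i = of_real (c (i + 1)) * w $ i
      + (if i + 1 < n then \<i> * of_real (sqrt (d (i + 2))) * w $ (i + 1) else 0)
      + (if 0 < i then - \<i> * of_real (sqrt (d (i - 1 + 2))) * w $ (i - 1) else 0)"
    unfolding Amat_def using tridiagonal_mult_vec_index[OF assms] by simp
  have B: "(Bmat d n *\<^sub>v w) $ i = w $ i
      + (if i + 1 < n then of_real (sqrt (d (i + 2))) * w $ (i + 1) else 0)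
      + (if 0 < i then of_real (sqrt (d (i - 1 + 2))) * w $ (i - 1) else 0)"
    unfolding Bmat_def using tridiagonal_mult_vec_index[OF assms] by simp
  show ?thesis
    unfolding A B pencil_row_def trunc_seq_def using assms(1)
    by (cases "0 < i"; cases "i + 1 < n") (simp_all add: algebra_simps)
qed

lemma pencil_mult_vec_eq_iff:
  assumes "v \<in> carrier_vec n"
  shows "Amat c d n *\<^sub>v v = z \<cdot>\<^sub>v (Bmat d n *\<^sub>v v)
     \<longleftrightarrow> (\<forall>i<n. pencil_row c d z (trunc_seq n (($) v)) i = 0)"
proof -
  have "Amat c d n *\<^sub>v v = z \<cdot>\<^sub>v (Bmat d n *\<^sub>v v)
      \<longleftrightarrow> (\<forall>i<n. (Amat c d n *\<^sub>v v) $ i - z * (Bmat d n *\<^sub>v v) $ i = 0)"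
    by (auto simp: vec_eq_iff Amat_def Bmat_def)
  then show ?thesis
    using pencil_mult_vec_index[OF _ assms] by simp
qed

lemma trunc_seq_uvec: "trunc_seq n (($) (uvec c d n x)) = trunc_seq n (\<lambda>k. un c d k x)"
  by (auto simp: trunc_seq_def uvec_def)

lemma pencil_row_solution_at_i:
  assumes "\<forall>k<n. pencil_row c d \<i> w k = 0" and "k < n"
  shows "w k = 0"
  using assms(2)
proof (induction k)
  case 0
  have "of_real (c 1) - \<i> \<noteq> 0"
    by (simp add: complex_eq_iff)
  then show ?case
    using assms(1)[rule_format, of 0] 0 unfolding pencil_row_def by simp
next
  case (Suc k)
  have "of_real (c (k + 2)) - \<i> \<noteq> 0"
    by (simp add: complex_eq_iff)
  then show ?case
    using assms(1)[rule_format, of "Suc k"] Suc unfolding pencil_row_def by (simp add: numeral_eq_Suc)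
qed

lemma pencil_row_un_0:
  assumes "0 < d 2" and "x \<noteq> \<i>"
  shows "pencil_row c d x (\<lambda>j. un c d j x) 0 = 0"
proof -
  have "(\<i> - x) * of_real (sqrt (d 2)) * un c d 1 x = x - of_real (c 1)"
    using assms unfolding un_def by (simp add: field_simps numeral_2_eq_2)
  then show ?thesis
    unfolding pencil_row_def by (simp add: un_def numeral_2_eq_2)
qed

context
  fixes d :: "nat \<Rightarrow> real"
  assumes d_pos: "\<And>m. 2 \<le> m \<Longrightarrow> 0 < d m"
begin

lemma un_eq_0_iff:
  assumes "x \<noteq> \<i>"
  shows "un c d k x = 0 \<longleftrightarrow> Pn c d k x = 0"
proof -
  have "\<forall>j \<in> {1..k}. d (j + 1) \<noteq> 0"
    using d_pos[of "_ + 1"] by force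
  then show ?thesis
    using assms unfolding un_def by simp
qed

text \<open>All three terms are multiples of \<open>N\<close>, and the bracket vanishes by the recurrence of \<open>P\<^sub>n\<close>
  since \<open>x\<^sup>2 + 1 = (x - \<i>)(x + \<i>)\<close>.\<close>
lemma pencil_row_un_Suc:
  assumes "x \<noteq> \<i>"
  shows "pencil_row c d x (\<lambda>j. un c d j x) (Suc j) = 0"
proof -
  define T where "T = (\<Prod>i = 1..j. sqrt (d (i + 1)))"
  define a where "a = sqrt (d (j + 2))"
  define b where "b = sqrt (d (j + 3))"
  define q where "q = x - \<i>"
  define N where "N = (-1) ^ j / (q ^ (j + 1) * of_real T * of_real a)"
  have "0 < T"
    unfolding T_def by (rule prod_pos) (use d_pos in auto)
  have "0 < a" "0 < b"
    unfolding a_def b_def using d_pos by auto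
  have "q \<noteq> 0"
    using assms unfolding q_def by simp
  have T1: "(\<Prod>i = 1..j + 1. sqrt (d (i + 1))) = T * a"
    unfolding T_def a_def by (simp add: prod.cl_ivl_Suc)
  have T2: "(\<Prod>i = 1..j + 2. sqrt (d (i + 1))) = T * a * b"
    using T1 unfolding b_def by (simp add: prod.cl_ivl_Suc numeral_eq_Suc)
  have u0: "un c d j x = N * (q * of_real a * Pn c d j x)"
    using \<open>0 < T\<close> \<open>0 < a\<close> \<open>q \<noteq> 0\<close>
    unfolding un_def N_def T_def[symmetric] q_def[symmetric] by (simp add: field_simps)
  have u1: "un c d (j + 1) x = - N * Pn c d (j + 1) x"
    unfolding un_def N_def T1 q_def by simp
  have u2: "(\<i> - x) * of_real b * un c d (j + 2) x = - N * Pn c d (j + 2) x"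
    using \<open>0 < T\<close> \<open>0 < a\<close> \<open>0 < b\<close> \<open>q \<noteq> 0\<close>
    unfolding un_def N_def T2 minus_diff_eq[of x \<i>, symmetric] q_def[symmetric]
    by (simp add: field_simps del: Pn.simps)
  have aa: "complex_of_real (d (j + 2)) = of_real a * of_real a"
    unfolding a_def using d_pos[of "j + 2"] by (simp flip: of_real_mult)
  have P: "Pn c d (j + 2) x = (x - of_real (c (j + 2))) * Pn c d (j + 1) x
      - of_real a * of_real a * ((x - \<i>) * (x + \<i>)) * Pn c d j x"
    by (simp add: numeral_eq_Suc aa[symmetric] algebra_simps power2_eq_square)
  have row: "pencil_row c d x (\<lambda>j. un c d j x) (Suc j) = (of_real (c (j + 2)) - x) * un c d (j + 1) x
      + (\<i> - x) * of_real b * un c d (j + 2) x + (- \<i> - x) * of_real a * un c d j x"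
    unfolding pencil_row_def a_def b_def by (simp add: numeral_eq_Suc)
  show ?thesis
    unfolding row u0 u1 u2 P q_def by (simp add: algebra_simps)
qed

lemma pencil_row_un:
  assumes "x \<noteq> \<i>"
  shows "pencil_row c d x (\<lambda>j. un c d j x) k = 0"
  using pencil_row_un_0[OF d_pos] pencil_row_un_Suc assms by (cases k) auto

lemma pencil_row_solution_zero:
  assumes "z \<noteq> \<i>"
    and "\<forall>k<m. pencil_row c d z w k = 0" and "w 0 = 0" and "k \<le> m"
  shows "w k = 0"
  using assms(4)
proof (induction k rule: less_induct)
  case (less k)
  show ?case
  proof (cases k)
    case (Suc j)
    have "w j = 0" and "w (j - 1) = 0"
      using less Suc by auto
    then have "pencil_row c d z w j = (\<i> - z) * of_real (sqrt (d (j + 2))) * w (j + 1)"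
      unfolding pencil_row_def by simp
    then have "(\<i> - z) * of_real (sqrt (d (j + 2))) * w (j + 1) = 0"
      using assms(2) less.prems Suc by simp
    moreover have "(\<i> - z) * of_real (sqrt (d (j + 2))) \<noteq> 0"
      using d_pos[of "j + 2"] assms(1) by simp
    ultimately show ?thesis
      using Suc by simp
  qed (use assms(3) in simp)
qed

lemma pencil_row_solution_eq:
  assumes "z \<noteq> \<i>"
    and "\<forall>k<m. pencil_row c d z w k = 0" and "k \<le> m"
  shows "w k = w 0 * un c d k z"
proof -
  have "\<forall>k<m. pencil_row c d z (\<lambda>j. w j - w 0 * un c d j z) k = 0"
    using assms(2) pencil_row_un[OF assms(1)] by (simp add: pencil_row_diff pencil_row_scale)
  then have "(\<lambda>j. w j - w 0 * un c d j z) k = 0"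
    by (rule pencil_row_solution_zero[OF assms(1)]) (use assms(3) in \<open>simp_all add: un_def\<close>)
  then show ?thesis
    by simp
qed

lemma Amat_mult_uvec:
  assumes "x \<noteq> \<i>" and "0 < n"
  shows "Amat c d n *\<^sub>v uvec c d n x =
           x \<cdot>\<^sub>v (Bmat d n *\<^sub>v uvec c d n x)
           + (of_real (sqrt (d (n + 1))) * (x - \<i>) * un c d n x) \<cdot>\<^sub>v unit_vec n (n - 1)"
proof (rule eq_vecI)
  fix i
  assume "i < dim_vec (x \<cdot>\<^sub>v (Bmat d n *\<^sub>v uvec c d n x)
           + (of_real (sqrt (d (n + 1))) * (x - \<i>) * un c d n x) \<cdot>\<^sub>v unit_vec n (n - 1))"
  then have "i < n"
    by simp
  have "(Amat c d n *\<^sub>v uvec c d n x) $ i - x * (Bmat d n *\<^sub>v uvec c d n x) $ i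
      = pencil_row c d x (trunc_seq n (\<lambda>k. un c d k x)) i"
    using pencil_mult_vec_index[OF \<open>i < n\<close>] trunc_seq_uvec by (simp add: uvec_def)
  also have "\<dots> = (if i = n - 1 then of_real (sqrt (d (n + 1))) * (x - \<i>) * un c d n x else 0)"
    using pencil_row_trunc_seq[OF \<open>i < n\<close>, where c = c and d = d and z = x and w = "\<lambda>k. un c d k x"]
      pencil_row_un[OF assms(1), of c i] \<open>i < n\<close>
    by (auto simp: algebra_simps)
  finally have "(Amat c d n *\<^sub>v uvec c d n x) $ i - x * (Bmat d n *\<^sub>v uvec c d n x) $ i
      = (if i = n - 1 then of_real (sqrt (d (n + 1))) * (x - \<i>) * un c d n x else 0)" .
  then show "(Amat c d n *\<^sub>v uvec c d n x) $ i = (x \<cdot>\<^sub>v (Bmat d n *\<^sub>v uvec c d n x)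
           + (of_real (sqrt (d (n + 1))) * (x - \<i>) * un c d n x) \<cdot>\<^sub>v unit_vec n (n - 1)) $ i"
    using \<open>i < n\<close> by (simp add: Bmat_def algebra_simps)
qed (simp add: Amat_def Bmat_def)

lemma Pn_eq_0_imp_generalized_eigenvalue:
  assumes "Pn c d n z = 0" and "0 < n"
  shows "\<exists>v \<in> carrier_vec n. v \<noteq> 0\<^sub>v n \<and> Amat c d n *\<^sub>v v = z \<cdot>\<^sub>v (Bmat d n *\<^sub>v v)"
proof (intro bexI conjI)
  have "z \<noteq> \<i>"
    using assms(1) Pn_at_i_nonzero by blast
  then have "un c d n z = 0"
    using un_eq_0_iff assms(1) by blast
  show carrier: "uvec c d n z \<in> carrier_vec n"
    by (simp add: uvec_def)
  show "uvec c d n z \<noteq> 0\<^sub>v n"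
  proof
    assume "uvec c d n z = 0\<^sub>v n"
    then have "uvec c d n z $ 0 = 0"
      using assms(2) by simp
    then show False
      using assms(2) by (simp add: uvec_def un_def)
  qed
  show "Amat c d n *\<^sub>v uvec c d n z = z \<cdot>\<^sub>v (Bmat d n *\<^sub>v uvec c d n z)"
    unfolding pencil_mult_vec_eq_iff[OF carrier] trunc_seq_uvec
    using pencil_row_trunc_seq[where c = c and d = d and z = z and w = "\<lambda>k. un c d k z"]
      pencil_row_un[OF \<open>z \<noteq> \<i>\<close>, of c] \<open>un c d n z = 0\<close>
    by simp
qed

lemma generalized_eigenvalue_imp_Pn_eq_0:
  assumes "v \<in> carrier_vec n" and "v \<noteq> 0\<^sub>v n" and "Amat c d n *\<^sub>v v = z \<cdot>\<^sub>v (Bmat d n *\<^sub>v v)"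
  shows "Pn c d n z = 0"
proof -
  define w where "w = trunc_seq n (($) v)"
  have rows: "\<forall>i<n. pencil_row c d z w i = 0"
    using pencil_mult_vec_eq_iff[OF assms(1)] assms(3) unfolding w_def by blast
  have w_nonzero: "\<not> (\<forall>k<n. w k = 0)"
  proof
    assume "\<forall>k<n. w k = 0"
    then have "v = 0\<^sub>v n"
      using assms(1) by (intro eq_vecI) (auto simp: w_def trunc_seq_def)
    then show False
      using assms(2) by blast
  qed
  then have "0 < n"
    by auto
  have "z \<noteq> \<i>"
    using pencil_row_solution_at_i rows w_nonzero by blast
  have w_un: "w = trunc_seq n (\<lambda>k. w 0 * un c d k z)"
  proof
    fix k
    show "w k = trunc_seq n (\<lambda>k. w 0 * un c d k z) k"
      using pencil_row_solution_eq[OF \<open>z \<noteq> \<i>\<close>, of "n - 1" c w k] rows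
      by (cases "k < n") (auto simp: trunc_seq_def w_def)
  qed
  then have "w 0 \<noteq> 0"
    using w_nonzero by (metis mult_zero_left trunc_seq_def)
  have "0 = pencil_row c d z w (n - 1)"
    using rows \<open>0 < n\<close> by simp
  also have "\<dots> = - w 0 * ((\<i> - z) * of_real (sqrt (d (n + 1))) * un c d n z)"
    using pencil_row_trunc_seq[where c = c and d = d and z = z and w = "\<lambda>k. w 0 * un c d k z"]
      pencil_row_scale pencil_row_un[OF \<open>z \<noteq> \<i>\<close>, of c] \<open>0 < n\<close>
    by (subst w_un) simp
  finally have "un c d n z = 0"
    using \<open>w 0 \<noteq> 0\<close> \<open>z \<noteq> \<i>\<close> d_pos[of "n + 1"] \<open>0 < n\<close> by simp
  then show ?thesis
    using un_eq_0_iff \<open>z \<noteq> \<i>\<close> by blast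
qed

end

theorem theorem1p1:
  fixes c d :: "nat \<Rightarrow> real" and n :: nat
  assumes "positive_chain_sequence d" and "n \<ge> 2"
  shows "(\<forall>x :: complex. x \<noteq> \<i> \<longrightarrow>
            Amat c d n *\<^sub>v uvec c d n x =
              x \<cdot>\<^sub>v (Bmat d n *\<^sub>v uvec c d n x)
              + (of_real (sqrt (d (n + 1))) * (x - \<i>) * un c d n x) \<cdot>\<^sub>v unit_vec n (n - 1))
       \<and> {x :: complex. Pn c d n x = 0} =
         {z :: complex. \<exists>v \<in> carrier_vec n. v \<noteq> 0\<^sub>v n \<and>
              Amat c d n *\<^sub>v v = z \<cdot>\<^sub>v (Bmat d n *\<^sub>v v)}"
proof -
  note d_pos = positive_chain_sequence_pos[OF assms(1)]
  have "0 < n"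
    using assms(2) by simp
  show ?thesis
    using Amat_mult_uvec[where d = d, OF d_pos _ \<open>0 < n\<close>]
      Pn_eq_0_imp_generalized_eigenvalue[where d = d, OF d_pos _ \<open>0 < n\<close>]
      generalized_eigenvalue_imp_Pn_eq_0[where d = d, OF d_pos]
    by blast
qed

end
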